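(* Let $Z$ be a smooth toric variety with ample anticanonical bundle which is obtained from $\mathbb{A}^l$ by a sequence of blow-ups, each centered in a torus-fixed point of the previous variety. Then $Z$ is either $\mathbb{A}^l$ or the blow-up of $\mathbb{A}^l$ at the torus-fixed point (the origin).
   Context: $\mathbb{A}^l$ is the affine toric variety of the torus $S=(\mathbb{C}^* )^l$ (fan: the cone spanned by a lattice basis and its faces); blow-ups at torus-fixed points are toric, corresponding to star subdivision of a maximal cone at the sum of its generators. *)

theory Defs
  imports "HOL-Analysis.Analysis"
begin

text \<open>Smooth fans in the lattice N = Z^n (index type 'n, so l = CARD('n)).
  A smooth fan all of whose maximal cones are full-dimensional is recorded by
  its set of maximal cones; each maximal cone is recorded by its set of
  primitive ray generators (a lattice basis). The fan itself is the set of
  all faces of these cones.\<close>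

type_synonym 'n cone_gens = "(int ^ 'n) set"
type_synonym 'n smooth_fan = "'n cone_gens set"

definition std_cone :: "('n::finite) cone_gens" where
  "std_cone = {axis i 1 | i. True}"

definition affine_space_fan :: "('n::finite) smooth_fan" where
  "affine_space_fan = {std_cone}"

text \<open>Blow-up at the torus-fixed point corresponding to the maximal cone sigma:
  star subdivision of sigma at the sum of its generators.\<close>
definition star_subdiv :: "('n::finite) smooth_fan \<Rightarrow> 'n cone_gens \<Rightarrow> 'n smooth_fan" where
  "star_subdiv F \<sigma> = (F - {\<sigma>}) \<union> {insert (\<Sum>\<sigma>) (\<sigma> - {w}) | w. w \<in> \<sigma>}"

inductive iterated_point_blowup :: "('n::finite) smooth_fan \<Rightarrow> bool" where
  base: "iterated_point_blowup affine_space_fan"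
| step: "iterated_point_blowup F \<Longrightarrow> \<sigma> \<in> F \<Longrightarrow> iterated_point_blowup (star_subdiv F \<sigma>)"

definition pairing :: "real ^ ('n::finite) \<Rightarrow> int ^ 'n \<Rightarrow> real" where
  "pairing m u = (\<Sum>i\<in>UNIV. m $ i * of_int (u $ i))"

text \<open>Ampleness of the anticanonical divisor -K = sum of all torus-invariant prime
  divisors, for a smooth fan with convex full-dimensional support: its support
  function is strictly convex, i.e. for each maximal cone sigma the linear
  functional taking value 1 on the generators of sigma takes value < 1 on every
  ray generator of the fan not in sigma (Cox-Little-Schenck, Thm 6.1.14,
  Lemma 6.1.13).\<close>
definition anticanonical_ample :: "('n::finite) smooth_fan \<Rightarrow> bool" where
  "anticanonical_ample F \<longleftrightarrow>
     (\<forall>\<sigma>\<in>F. \<exists>m :: real ^ 'n.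
        (\<forall>w\<in>\<sigma>. pairing m w = 1) \<and> (\<forall>u\<in>\<Union>F - \<sigma>. pairing m u < 1))"

end

theory Submission
  imports Defs
begin

text \<open>If -K is ample, then for every maximal cone \<tau> some linear functional is 1 on the
  generators of \<tau> and < 1 on all other rays; so ampleness fails as soon as a ray outside a
  maximal cone \<tau> is an integer combination of the generators of \<tau> with coefficient sum \<ge> 1.
  Blowing up the origin of A^l and then a point of the exceptional divisor produces such a
  ray: with s = e_1 + \<dots> + e_l, the generator e_i equals s minus the sum of the e_j (j \<noteq> i)
  in the cone {s} \<union> {e_j | j \<noteq> i}, with coefficient sum 2 - l, and blowing up that cone
  raises the sum to 1. Any further blow-up keeps such a witness: a blow-up at \<tau> itself
  rewrites the ray in a cone of the subdivision, and a negative coefficient makes its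
  coefficient sum grow.\<close>

abbreviation star_cone :: "('n::finite) cone_gens \<Rightarrow> int ^ 'n \<Rightarrow> 'n cone_gens" where
  "star_cone \<sigma> w \<equiv> insert (\<Sum>\<sigma>) (\<sigma> - {w})"

lemma star_subdivE:
  assumes "\<rho> \<in> star_subdiv G \<sigma>"
  obtains "\<rho> \<in> G" "\<rho> \<noteq> \<sigma>" | w where "w \<in> \<sigma>" "\<rho> = star_cone \<sigma> w"
  using assms unfolding star_subdiv_def by auto

lemma star_subdiv_memI:
  "\<rho> \<in> G \<Longrightarrow> \<rho> \<noteq> \<sigma> \<Longrightarrow> \<rho> \<in> star_subdiv G \<sigma>"
  "w \<in> \<sigma> \<Longrightarrow> star_cone \<sigma> w \<in> star_subdiv G \<sigma>"
  unfolding star_subdiv_def by blast+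

lemma card_ge_2_other_element:
  assumes "2 \<le> card A"
  shows "\<exists>y\<in>A. y \<noteq> x"
proof (rule ccontr)
  assume "\<not> ?thesis"
  then have "A \<subseteq> {x}" by blast
  then have "card A \<le> 1"
    using card_mono[of "{x}" A] by simp
  then show False using assms by simp
qed

lemma Union_star_subdiv_supset:
  assumes "2 \<le> card \<sigma>"
  shows "\<Union>G \<subseteq> \<Union>(star_subdiv G \<sigma>)"
proof
  fix x assume "x \<in> \<Union>G"
  then obtain \<rho> where \<rho>: "\<rho> \<in> G" "x \<in> \<rho>" by blast
  show "x \<in> \<Union>(star_subdiv G \<sigma>)"
  proof (cases "\<rho> = \<sigma>")
    case False
    then show ?thesis using \<rho> star_subdiv_memI(1) by blast
  next
    case True
    obtain w where w: "w \<in> \<sigma>" "w \<noteq> x"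
      using card_ge_2_other_element[OF assms] by blast
    then have "star_cone \<sigma> w \<in> star_subdiv G \<sigma>"
      using star_subdiv_memI(2) by blast
    moreover have "x \<in> star_cone \<sigma> w"
      using \<rho> True w by blast
    ultimately show ?thesis by blast
  qed
qed

lemma star_subdiv_card_one:
  assumes "\<sigma> \<in> F" "card \<sigma> = 1"
  shows "star_subdiv F \<sigma> = F"
proof -
  obtain v where "\<sigma> = {v}" using assms(2) card_1_singletonE by blast
  then have "{star_cone \<sigma> w | w. w \<in> \<sigma>} = {\<sigma>}" by auto
  then show ?thesis using assms(1) unfolding star_subdiv_def by auto
qed

definition int_independent :: "('n::finite) cone_gens \<Rightarrow> bool" where
  "int_independent \<sigma> \<longleftrightarrow> (\<forall>c. (\<Sum>v\<in>\<sigma>. c v *s v) = 0 \<longrightarrow> (\<forall>v\<in>\<sigma>. c v = (0::int)))"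

lemma int_independent_lincomb_eq:
  assumes "int_independent \<sigma>" "(\<Sum>v\<in>\<sigma>. a v *s v) = (\<Sum>v\<in>\<sigma>. b v *s v)" "v \<in> \<sigma>"
  shows "a v = b v"
proof -
  have "(\<Sum>v\<in>\<sigma>. (a v - b v) *s v) = 0"
    using assms(2) by (simp add: vector_sub_rdistrib sum_subtractf)
  then show ?thesis
    using assms(1,3) unfolding int_independent_def by fastforce
qed

lemma lincomb_indicator:
  assumes "finite \<sigma>" "x \<in> \<sigma>"
  shows "(\<Sum>v\<in>\<sigma>. (if v = x then 1 else 0::int) *s v) = x"
proof -
  have "(\<Sum>v\<in>\<sigma>. (if v = x then 1 else 0::int) *s v) = (\<Sum>v\<in>\<sigma>. if v = x then v else 0)"
    by (rule sum.cong) auto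
  also have "\<dots> = x"
    using assms by (simp add: sum.delta')
  finally show ?thesis .
qed

lemma sum_notin_int_independent:
  assumes "finite \<sigma>" "int_independent \<sigma>" "2 \<le> card \<sigma>"
  shows "\<Sum>\<sigma> \<notin> \<sigma>"
proof
  assume s: "\<Sum>\<sigma> \<in> \<sigma>"
  obtain y where y: "y \<in> \<sigma>" "y \<noteq> \<Sum>\<sigma>"
    using card_ge_2_other_element[OF assms(3)] by blast
  have "(\<Sum>v\<in>\<sigma>. 1 *s v) = (\<Sum>v\<in>\<sigma>. (if v = \<Sum>\<sigma> then 1 else 0::int) *s v)"
    using lincomb_indicator[OF assms(1) s] by simp
  from int_independent_lincomb_eq[OF assms(2) this y(1)] y(2) show False by simp
qed

text \<open>Writing w as \<Sum>\<sigma> minus the other generators turns coordinates with respect to \<sigma>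
  into coordinates with respect to star_cone \<sigma> w.\<close>

definition star_coeffs :: "('n::finite) cone_gens \<Rightarrow> int ^ 'n \<Rightarrow> (int ^ 'n \<Rightarrow> int) \<Rightarrow> int ^ 'n \<Rightarrow> int" where
  "star_coeffs \<sigma> w c v = (if v = \<Sum>\<sigma> then c w else c v - c w)"

lemma lincomb_star_coeffs:
  assumes "finite \<sigma>" "w \<in> \<sigma>" "\<Sum>\<sigma> \<notin> \<sigma> - {w}"
  shows "(\<Sum>v\<in>\<sigma>. c v *s v) = (\<Sum>v\<in>star_cone \<sigma> w. star_coeffs \<sigma> w c v *s v)"
proof -
  have "(\<Sum>v\<in>star_cone \<sigma> w. star_coeffs \<sigma> w c v *s v)
      = c w *s \<Sum>\<sigma> + (\<Sum>v\<in>\<sigma> - {w}. (c v - c w) *s v)"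
    using assms by (simp add: star_coeffs_def, intro sum.cong) auto
  also have "\<dots> = c w *s (w + \<Sum>(\<sigma> - {w})) + (\<Sum>v\<in>\<sigma> - {w}. c v *s v) - c w *s \<Sum>(\<sigma> - {w})"
    using assms by (simp add: sum.remove vector_sub_rdistrib sum_subtractf sum_cmul)
  also have "\<dots> = (\<Sum>v\<in>\<sigma>. c v *s v)"
    using assms by (simp add: sum.remove vector_add_ldistrib)
  finally show ?thesis ..
qed

lemma sum_star_coeffs:
  assumes "finite \<sigma>" "w \<in> \<sigma>" "\<Sum>\<sigma> \<notin> \<sigma> - {w}"
  shows "(\<Sum>v\<in>star_cone \<sigma> w. star_coeffs \<sigma> w c v) = (\<Sum>v\<in>\<sigma>. c v) - (int (card \<sigma>) - 1) * c w"
proof -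
  have "(\<Sum>v\<in>star_cone \<sigma> w. star_coeffs \<sigma> w c v) = c w + (\<Sum>v\<in>\<sigma> - {w}. c v - c w)"
    using assms by (simp add: star_coeffs_def, intro sum.cong) auto
  also have "\<dots> = c w + ((\<Sum>v\<in>\<sigma>. c v) - c w) - int (card \<sigma> - 1) * c w"
    using assms by (simp only: sum_subtractf sum_diff1 sum_constant card_Diff_singleton if_True of_nat_mult)
  also have "int (card \<sigma> - 1) = int (card \<sigma>) - 1"
    using assms(1,2) card_gt_0_iff[of \<sigma>] by (cases "card \<sigma>") auto
  finally show ?thesis
    by simp
qed

lemma card_star_cone:
  assumes "finite \<sigma>" "int_independent \<sigma>" "2 \<le> card \<sigma>" "w \<in> \<sigma>"
  shows "card (star_cone \<sigma> w) = card \<sigma>"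
  using assms sum_notin_int_independent[OF assms(1-3)] by (simp add: card_Diff_singleton)

lemma int_independent_star_cone:
  assumes "finite \<sigma>" "int_independent \<sigma>" "2 \<le> card \<sigma>" "w \<in> \<sigma>"
  shows "int_independent (star_cone \<sigma> w)"
  unfolding int_independent_def
proof (intro allI impI ballI)
  fix d x
  assume d: "(\<Sum>v\<in>star_cone \<sigma> w. d v *s v) = 0" and x: "x \<in> star_cone \<sigma> w"
  have s: "\<Sum>\<sigma> \<notin> \<sigma>"
    using sum_notin_int_independent[OF assms(1-3)] .
  define c where "c v = (if v = w then d (\<Sum>\<sigma>) else d v + d (\<Sum>\<sigma>))" for v
  have "(\<Sum>v\<in>star_cone \<sigma> w. star_coeffs \<sigma> w c v *s v) = (\<Sum>v\<in>star_cone \<sigma> w. d v *s v)"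
    using s assms(4) by (intro sum.cong) (auto simp: star_coeffs_def c_def)
  then have "(\<Sum>v\<in>\<sigma>. c v *s v) = 0"
    using lincomb_star_coeffs[OF assms(1,4)] s d by auto
  then have c0: "\<forall>v\<in>\<sigma>. c v = 0"
    using assms(2) unfolding int_independent_def by blast
  then have "d (\<Sum>\<sigma>) = 0"
    using assms(4) unfolding c_def by force
  then show "d x = 0"
    using c0 x by (auto simp: c_def split: if_splits)
qed

definition full_simplicial_fan :: "('n::finite) smooth_fan \<Rightarrow> bool" where
  "full_simplicial_fan F \<longleftrightarrow> (\<forall>\<sigma>\<in>F. finite \<sigma> \<and> card \<sigma> = CARD('n) \<and> int_independent \<sigma>)"

lemma full_simplicial_fan_star_subdiv:
  fixes G :: "('n::finite) smooth_fan"
  assumes "full_simplicial_fan G" "2 \<le> CARD('n)" "\<sigma> \<in> G"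
  shows "full_simplicial_fan (star_subdiv G \<sigma>)"
  unfolding full_simplicial_fan_def
proof
  fix \<rho> assume "\<rho> \<in> star_subdiv G \<sigma>"
  then show "finite \<rho> \<and> card \<rho> = CARD('n) \<and> int_independent \<rho>"
  proof (cases rule: star_subdivE)
    case 1
    then show ?thesis using assms(1) unfolding full_simplicial_fan_def by simp
  next
    case (2 w)
    have "finite \<sigma>" "card \<sigma> = CARD('n)" "int_independent \<sigma>"
      using assms(1,3) unfolding full_simplicial_fan_def by simp_all
    then show ?thesis
      using 2 assms(2) card_star_cone[of \<sigma> w] int_independent_star_cone[of \<sigma> w] by simp
  qed
qed

lemma std_cone_eq_range_axis: "(std_cone :: ('n::finite) cone_gens) = range (\<lambda>i. axis i 1)"
  unfolding std_cone_def by auto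

lemma inj_axis_one: "inj (\<lambda>i::'n::finite. axis i (1::int))"
proof (rule injI)
  fix i j :: 'n
  assume "axis i (1::int) = axis j 1"
  then have "axis i (1::int) $ i = axis j 1 $ i" by simp
  then show "i = j" by (simp add: axis_def split: if_splits)
qed

lemma lincomb_std_cone_nth:
  "(\<Sum>v\<in>std_cone. c v *s v) $ j = c (axis j 1 :: int ^ ('n::finite))"
proof -
  have "(\<Sum>v\<in>std_cone. c v *s v) $ j = (\<Sum>i\<in>UNIV. c (axis i 1) * axis i (1::int) $ j)"
    unfolding std_cone_eq_range_axis by (simp add: sum.reindex[OF inj_axis_one] sum_component)
  also have "\<dots> = (\<Sum>i\<in>UNIV. if i = j then c (axis i 1) else 0)"
    by (rule sum.cong) (auto simp: axis_def)
  finally show ?thesis by simp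
qed

lemma full_simplicial_affine_space_fan: "full_simplicial_fan (affine_space_fan :: ('n::finite) smooth_fan)"
proof -
  have "int_independent (std_cone :: 'n cone_gens)"
    unfolding int_independent_def
  proof (intro allI impI ballI)
    fix c :: "int ^ 'n \<Rightarrow> int" and x :: "int ^ 'n"
    assume c: "(\<Sum>v\<in>std_cone. c v *s v) = 0" and "x \<in> std_cone"
    then obtain j where "x = axis j 1"
      unfolding std_cone_eq_range_axis by blast
    then show "c x = 0"
      using lincomb_std_cone_nth[of c j] c by simp
  qed
  then show ?thesis
    unfolding full_simplicial_fan_def affine_space_fan_def std_cone_eq_range_axis
    by (simp add: card_image inj_axis_one)
qed

lemma iterated_point_blowup_full_simplicial:
  fixes F :: "('n::finite) smooth_fan"
  assumes "iterated_point_blowup F"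
  shows "full_simplicial_fan F"
  using assms
proof induction
  case base
  show ?case by (rule full_simplicial_affine_space_fan)
next
  case (step G \<sigma>)
  show ?case
  proof (cases "CARD('n) = 1")
    case True
    then have "card \<sigma> = 1" using step unfolding full_simplicial_fan_def by simp
    then show ?thesis using step star_subdiv_card_one by metis
  next
    case False
    then have "2 \<le> CARD('n)"
      using zero_less_card_finite[where 'a='n] by linarith
    then show ?thesis using step full_simplicial_fan_star_subdiv by blast
  qed
qed

text \<open>The negative coefficient is what keeps the witness alive when \<tau> itself is blown up
  (see sum_star_coeffs).\<close>

definition ampleness_obstruction :: "int \<Rightarrow> ('n::finite) smooth_fan \<Rightarrow> bool" where
  "ampleness_obstruction k F \<longleftrightarrow>
     (\<exists>\<tau>\<in>F. \<exists>u\<in>\<Union>F - \<tau>. \<exists>c. u = (\<Sum>v\<in>\<tau>. c v *s v) \<and> (\<exists>w\<in>\<tau>. c w < 0) \<and> k \<le> (\<Sum>v\<in>\<tau>. c v))"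

lemma pairing_lincomb:
  "pairing m (\<Sum>v\<in>\<tau>. c v *s v) = (\<Sum>v\<in>\<tau>. of_int (c v) * pairing m v)"
  unfolding pairing_def
  by (simp add: sum_component sum_distrib_left sum_distrib_right algebra_simps sum.swap[of _ UNIV \<tau>])

lemma not_anticanonical_ample_if_obstruction:
  assumes "ampleness_obstruction 1 F"
  shows "\<not> anticanonical_ample F"
proof
  assume ample: "anticanonical_ample F"
  obtain \<tau> u c where \<tau>: "\<tau> \<in> F" and u: "u \<in> \<Union>F - \<tau>" "u = (\<Sum>v\<in>\<tau>. c v *s v)"
    and sum_ge: "1 \<le> (\<Sum>v\<in>\<tau>. c v)"
    using assms unfolding ampleness_obstruction_def by blast
  obtain m where m_on: "\<forall>w\<in>\<tau>. pairing m w = 1" and m_off: "\<forall>u\<in>\<Union>F - \<tau>. pairing m u < 1"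
    using ample \<tau> unfolding anticanonical_ample_def by blast
  have "pairing m u = of_int (\<Sum>v\<in>\<tau>. c v)"
    using u(2) m_on by (simp add: pairing_lincomb)
  moreover have "pairing m u < 1"
    using m_off u(1) by blast
  ultimately show False
    using sum_ge by linarith
qed

lemma ampleness_obstruction_star_subdiv_at:
  fixes G :: "('n::finite) smooth_fan"
  assumes "finite \<sigma>" "int_independent \<sigma>" "2 \<le> card \<sigma>"
    and u: "u \<in> \<Union>G - \<sigma>" "u = (\<Sum>v\<in>\<sigma>. c v *s v)"
    and w: "w \<in> \<sigma>" "c w < 0"
  shows "ampleness_obstruction ((\<Sum>v\<in>\<sigma>. c v) - (int (card \<sigma>) - 1) * c w) (star_subdiv G \<sigma>)"
proof -
  have s: "\<Sum>\<sigma> \<notin> \<sigma>"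
    using sum_notin_int_independent[OF assms(1-3)] .
  have "u \<noteq> \<Sum>\<sigma>"
  proof
    assume "u = \<Sum>\<sigma>"
    then have "(\<Sum>v\<in>\<sigma>. c v *s v) = (\<Sum>v\<in>\<sigma>. 1 *s v)"
      using u(2) by simp
    from int_independent_lincomb_eq[OF assms(2) this w(1)] w(2) show False by simp
  qed
  then have "u \<in> \<Union>(star_subdiv G \<sigma>) - star_cone \<sigma> w"
    using u(1) Union_star_subdiv_supset[OF assms(3)] by blast
  moreover have "u = (\<Sum>v\<in>star_cone \<sigma> w. star_coeffs \<sigma> w c v *s v)"
    using u(2) lincomb_star_coeffs[OF assms(1) w(1)] s by blast
  moreover have "star_coeffs \<sigma> w c (\<Sum>\<sigma>) < 0"
    using w(2) by (simp add: star_coeffs_def)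
  ultimately show ?thesis
    unfolding ampleness_obstruction_def
    using star_subdiv_memI(2)[OF w(1)] sum_star_coeffs[OF assms(1) w(1)] s
    by (intro bexI[of _ "star_cone \<sigma> w"] bexI[of _ u] exI[of _ "star_coeffs \<sigma> w c"]) auto
qed

lemma ampleness_obstruction_star_subdiv:
  fixes G :: "('n::finite) smooth_fan"
  assumes obs: "ampleness_obstruction k G"
    and G: "full_simplicial_fan G" "2 \<le> CARD('n)" and "\<sigma> \<in> G"
  shows "ampleness_obstruction k (star_subdiv G \<sigma>)"
proof -
  obtain \<tau> u c w where \<tau>: "\<tau> \<in> G" and u: "u \<in> \<Union>G - \<tau>" "u = (\<Sum>v\<in>\<tau>. c v *s v)"
    and w: "w \<in> \<tau>" "c w < 0" and k: "k \<le> (\<Sum>v\<in>\<tau>. c v)"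
    using obs unfolding ampleness_obstruction_def by blast
  have cone: "finite \<rho>" "int_independent \<rho>" "2 \<le> card \<rho>" if "\<rho> \<in> G" for \<rho>
    using G that unfolding full_simplicial_fan_def by auto
  show ?thesis
  proof (cases "\<sigma> = \<tau>")
    case True
    have "(int (card \<tau>) - 1) * c w \<le> 0"
      using cone(3)[OF \<tau>] w(2) by (simp add: mult_nonneg_nonpos)
    then have "k \<le> (\<Sum>v\<in>\<tau>. c v) - (int (card \<tau>) - 1) * c w"
      using k by linarith
    moreover have "ampleness_obstruction ((\<Sum>v\<in>\<tau>. c v) - (int (card \<tau>) - 1) * c w) (star_subdiv G \<tau>)"
      using ampleness_obstruction_star_subdiv_at[OF cone[OF \<tau>] u w] .
    ultimately show ?thesis
      unfolding True ampleness_obstruction_def by (meson order_trans)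
  next
    case False
    then have "\<tau> \<in> star_subdiv G \<sigma>"
      using \<tau> star_subdiv_memI(1) by blast
    moreover have "u \<in> \<Union>(star_subdiv G \<sigma>) - \<tau>"
      using u(1) Union_star_subdiv_supset[OF cone(3)[OF \<open>\<sigma> \<in> G\<close>]] by blast
    ultimately show ?thesis
      unfolding ampleness_obstruction_def using u(2) w k by blast
  qed
qed

lemma ampleness_obstruction_second_blowup:
  fixes G :: "('n::finite) smooth_fan"
  assumes \<sigma>: "finite \<sigma>" "int_independent \<sigma>" "2 \<le> card \<sigma>" and w: "w \<in> \<sigma>"
  shows "ampleness_obstruction 1 (star_subdiv (star_subdiv G \<sigma>) (star_cone \<sigma> w))"
proof -
  have s: "\<Sum>\<sigma> \<notin> \<sigma>"
    using sum_notin_int_independent[OF \<sigma>] .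
  obtain w' where w': "w' \<in> \<sigma>" "w' \<noteq> w"
    using card_ge_2_other_element[OF \<sigma>(3)] by blast
  define d where "d = star_coeffs \<sigma> w (\<lambda>v. if v = w then 1 else 0)"
  have "w = (\<Sum>v\<in>star_cone \<sigma> w. d v *s v)"
    using lincomb_star_coeffs[OF \<sigma>(1) w] lincomb_indicator[OF \<sigma>(1) w] s unfolding d_def by auto
  moreover have "w \<in> \<Union>(star_subdiv G \<sigma>) - star_cone \<sigma> w"
    using star_subdiv_memI(2)[OF w'(1), of G] w w' s by blast
  moreover have "d w' = -1"
    using w' s unfolding d_def star_coeffs_def by auto
  moreover have "(\<Sum>v\<in>star_cone \<sigma> w. d v) = 1 - (int (card \<sigma>) - 1)"
    using sum_star_coeffs[OF \<sigma>(1) w] s \<sigma>(1) w unfolding d_def by (simp add: sum.delta')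
  moreover have "finite (star_cone \<sigma> w)" "2 \<le> card (star_cone \<sigma> w)" "w' \<in> star_cone \<sigma> w"
    using \<sigma> w w' card_star_cone[OF \<sigma> w] by auto
  ultimately have "ampleness_obstruction (1 - (int (card \<sigma>) - 1) - (int (card \<sigma>) - 1) * (-1))
      (star_subdiv (star_subdiv G \<sigma>) (star_cone \<sigma> w))"
    using ampleness_obstruction_star_subdiv_at[of "star_cone \<sigma> w" w "star_subdiv G \<sigma>" d w']
      int_independent_star_cone[OF \<sigma> w] card_star_cone[OF \<sigma> w]
    by simp
  then show ?thesis by simp
qed

lemma iterated_point_blowup_cases:
  fixes F :: "('n::finite) smooth_fan"
  assumes "iterated_point_blowup F"
  shows "F = affine_space_fan \<or> F = star_subdiv affine_space_fan std_cone \<or> ampleness_obstruction 1 F"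
  using assms
proof induction
  case base
  show ?case by simp
next
  case (step G \<sigma>)
  have G: "full_simplicial_fan G"
    using iterated_point_blowup_full_simplicial[OF step.hyps(1)] .
  show ?case
  proof (cases "CARD('n) = 1")
    case True
    then have "card \<sigma> = 1"
      using G step.hyps(2) unfolding full_simplicial_fan_def by simp
    then show ?thesis
      using step star_subdiv_card_one by metis
  next
    case False
    then have n: "2 \<le> CARD('n)"
      using zero_less_card_finite[where 'a='n] by linarith
    have std: "finite (std_cone :: 'n cone_gens)" "int_independent (std_cone :: 'n cone_gens)"
      "2 \<le> card (std_cone :: 'n cone_gens)"
      using full_simplicial_affine_space_fan[where 'n='n] n
      unfolding full_simplicial_fan_def affine_space_fan_def by auto
    consider "G = affine_space_fan" | "G = star_subdiv affine_space_fan std_cone" | "ampleness_obstruction 1 G"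
      using step.IH by blast
    then show ?thesis
    proof cases
      case 1
      then show ?thesis
        using step.hyps(2) unfolding affine_space_fan_def by simp
    next
      case 2
      then obtain w where "w \<in> std_cone" "\<sigma> = star_cone std_cone w"
        using step.hyps(2) by (auto elim: star_subdivE simp: affine_space_fan_def)
      then show ?thesis
        using 2 ampleness_obstruction_second_blowup[OF std] by simp
    next
      case 3
      then show ?thesis
        using ampleness_obstruction_star_subdiv[OF 3 G n step.hyps(2)] by simp
    qed
  qed
qed

theorem proposition3p1:
  fixes F :: "('n::finite) smooth_fan"
  assumes "iterated_point_blowup F"
    and "anticanonical_ample F"
  shows "F = affine_space_fan \<or> F = star_subdiv affine_space_fan std_cone"
  using iterated_point_blowup_cases[OF assms(1)] not_anticanonical_ample_if_obstruction assms(2)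
  by blast

end
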